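(* For the problem $1\mid t_j=1\mid\sum C_j$ with obligatory tests (all test times equal to $1$), no deterministic online algorithm has competitive ratio strictly smaller than $\sqrt2$: for every deterministic algorithm and every $\rho<\sqrt2$ there is an instance on which $\mathit{ALG}>\rho\cdot\mathit{OPT}$.
   Context: Scheduling with obligatory tests and uniform test times: $n$ jobs on a single machine, each with test time $t_j=1$ and an unknown processing time $p_j\ge0$ that is revealed to the algorithm only when the test of $j$ completes. The test of a job must be executed before its processing part (which can be executed any time afterwards); operations are non-preemptive, one at a time. $C_j$ is the completion time of the processing part of $j$; objective $\sum_j C_j$. $\mathit{OPT}$ is the optimal offline objective value (tests also obligatory), $\mathit{ALG}$ the algorithm's value. An online algorithm knows $n$ and the test times in advance. *)

theory Defs
  imports Complex_Main
begin

datatype operation = Test nat | Proc nat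

fun dur :: "(nat \<Rightarrow> real) \<Rightarrow> operation \<Rightarrow> real" where
  "dur p (Test j) = 1"
| "dur p (Proc j) = p j"

text \<open>A schedule is a list of (operation, idle time inserted before it); operations run
  one at a time, non-preemptively, in list order.\<close>
definition feasible :: "nat \<Rightarrow> (operation \<times> real) list \<Rightarrow> bool" where
  "feasible n s \<longleftrightarrow>
     distinct (map fst s) \<and>
     set (map fst s) = {Test j | j. j < n} \<union> {Proc j | j. j < n} \<and>
     (\<forall>k j. k < length s \<and> fst (s ! k) = Proc j \<longrightarrow> (\<exists>i<k. fst (s ! i) = Test j)) \<and>
     (\<forall>k < length s. 0 \<le> snd (s ! k))"

definition finish :: "(nat \<Rightarrow> real) \<Rightarrow> (operation \<times> real) list \<Rightarrow> nat \<Rightarrow> real" where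
  "finish p s k = (\<Sum>i\<le>k. snd (s ! i) + dur p (fst (s ! i)))"

fun is_proc :: "operation \<Rightarrow> bool" where
  "is_proc (Test j) = False"
| "is_proc (Proc j) = True"

definition cost :: "(nat \<Rightarrow> real) \<Rightarrow> (operation \<times> real) list \<Rightarrow> real" where
  "cost p s = (\<Sum>k\<in>{k. k < length s \<and> is_proc (fst (s ! k))}. finish p s k)"

definition OPT :: "nat \<Rightarrow> (nat \<Rightarrow> real) \<Rightarrow> real" where
  "OPT n p = Inf {cost p s | s. feasible n s}"

text \<open>Information revealed to the online algorithm when an operation completes:
  the processing time p j after the test of j; nothing (0) after a processing part.\<close>
fun reveal :: "(nat \<Rightarrow> real) \<Rightarrow> operation \<Rightarrow> real" where
  "reveal p (Test j) = p j"
| "reveal p (Proc j) = 0"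

definition observations :: "(nat \<Rightarrow> real) \<Rightarrow> (operation \<times> real) list \<Rightarrow> (operation \<times> real) list" where
  "observations p s = map (\<lambda>(a, d). (a, reveal p a)) s"

text \<open>A deterministic online algorithm A: given n (test times are all 1, hence known) and the
  history of operations executed so far together with the information revealed by them,
  it decides the next operation and the idle time before starting it.\<close>
type_synonym online_algorithm = "nat \<Rightarrow> (operation \<times> real) list \<Rightarrow> operation \<times> real"

fun run :: "online_algorithm \<Rightarrow> nat \<Rightarrow> (nat \<Rightarrow> real) \<Rightarrow> nat \<Rightarrow> (operation \<times> real) list" where
  "run A n p 0 = []"
| "run A n p (Suc k) = (let s = run A n p k in s @ [A n (observations p s)])"

definition online_alg :: "online_algorithm \<Rightarrow> bool" where
  "online_alg A \<longleftrightarrow> (\<forall>n p. (\<forall>j<n. 0 \<le> p j) \<longrightarrow> feasible n (run A n p (2 * n)))"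

definition ALG :: "online_algorithm \<Rightarrow> nat \<Rightarrow> (nat \<Rightarrow> real) \<Rightarrow> real" where
  "ALG A n p = cost p (run A n p (2 * n))"

end

theory Submission
  imports Defs
begin

text \<open>Let the algorithm run on the instance in which all n = 8 jobs have processing time x = 8/5,
  and let Q j be the number of processing parts it starts before its (j+1)-th test.  For k = 3, 4
  change the instance so that only the jobs tested before the (k+1)-th test keep processing time x,
  all others get processing time 0.  Up to that test the algorithm cannot tell the two instances
  apart, so it starts the same way.  Each processing part started earlier waits for the preceding
  tests and long processing parts; of the later ones at most n - k are short, and each of those
  still needs its own test.  This bounds ALG from below in terms of k and Q 0, ..., Q k, while
  OPT is at most the cost of testing and processing the short jobs first.  A finite case analysis
  over Q 1 \<le> ... \<le> Q 4 shows that one of the two instances has ratio at least 99/70 > sqrt 2.\<close>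

section \<open>Runs of an online algorithm\<close>

lemma length_run [simp]: "length (run A n p M) = M"
  by (induction M) (auto simp: Let_def)

lemma take_run: "M \<le> N \<Longrightarrow> take M (run A n p N) = run A n p M"
  by (induction N) (auto simp: Let_def le_Suc_eq)

lemma nth_run: "i < M \<Longrightarrow> M \<le> N \<Longrightarrow> run A n p N ! i = run A n p M ! i"
  by (metis nth_take take_run)

lemma observations_cong:
  assumes "\<And>i j. i < length s \<Longrightarrow> fst (s ! i) = Test j \<Longrightarrow> p j = p' j"
  shows "observations p s = observations p' s"
  unfolding observations_def
proof (rule map_cong[OF refl])
  fix e assume "e \<in> set s"
  then obtain i where "i < length s" "s ! i = e" by (auto simp: in_set_conv_nth)
  with assms show "(case e of (a, d) \<Rightarrow> (a, reveal p a)) = (case e of (a, d) \<Rightarrow> (a, reveal p' a))"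
    by (cases e; cases "fst e") auto
qed

lemma run_Suc_cong:
  assumes "\<And>i j. i < M \<Longrightarrow> fst (run A n p M ! i) = Test j \<Longrightarrow> p j = p' j"
  shows "run A n p (Suc M) = run A n p' (Suc M)"
  using assms
proof (induction M)
  case 0
  then show ?case by (simp add: observations_def)
next
  case (Suc M)
  have "run A n p (Suc M) = run A n p' (Suc M)"
    using Suc.prems by (intro Suc.IH) (metis less_SucI nth_run le_SucI order_refl)
  moreover have "observations p (run A n p (Suc M)) = observations p' (run A n p (Suc M))"
    using Suc.prems by (intro observations_cong) (simp del: run.simps)
  ultimately show ?case
    by (simp only: run.simps Let_def)
qed

section \<open>Counting the operations of a schedule\<close>

definition tests_before :: "(operation \<times> real) list \<Rightarrow> nat \<Rightarrow> nat" where
  "tests_before s m = card {i. i < m \<and> \<not> is_proc (fst (s ! i))}"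

definition procs_before :: "(operation \<times> real) list \<Rightarrow> nat \<Rightarrow> nat" where
  "procs_before s m = card {i. i < m \<and> is_proc (fst (s ! i))}"

lemma card_less_Suc_filter:
  "card {i. i < Suc m \<and> P i} = card {i. i < m \<and> P i} + (if P m then 1 else 0)"
proof -
  have "{i. i < Suc m \<and> P i} = {i. i < m \<and> P i} \<union> (if P m then {m} else {})"
    by (auto simp: less_Suc_eq)
  then show ?thesis by auto
qed

lemma tests_before_0 [simp]: "tests_before s 0 = 0"
  and procs_before_0 [simp]: "procs_before s 0 = 0"
  by (simp_all add: tests_before_def procs_before_def)

lemma tests_before_Suc:
  "tests_before s (Suc m) = tests_before s m + (if is_proc (fst (s ! m)) then 0 else 1)"
  unfolding tests_before_def card_less_Suc_filter by simp

lemma procs_before_Suc: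
  "procs_before s (Suc m) = procs_before s m + (if is_proc (fst (s ! m)) then 1 else 0)"
  unfolding procs_before_def card_less_Suc_filter by simp

lemma tests_before_mono: "m \<le> m' \<Longrightarrow> tests_before s m \<le> tests_before s m'"
  unfolding tests_before_def by (rule card_mono) auto

lemma card_positions_in:
  assumes "distinct (map f xs)"
  shows "card {i. i < length xs \<and> f (xs ! i) \<in> C} = card (C \<inter> f ` set xs)"
proof (rule bij_betw_same_card, rule bij_betw_imageI)
  show "inj_on (\<lambda>i. f (xs ! i)) {i. i < length xs \<and> f (xs ! i) \<in> C}"
    using assms by (auto simp: inj_on_def distinct_conv_nth)
  show "(\<lambda>i. f (xs ! i)) ` {i. i < length xs \<and> f (xs ! i) \<in> C} = C \<inter> f ` set xs"
  proof
    show "C \<inter> f ` set xs \<subseteq> (\<lambda>i. f (xs ! i)) ` {i. i < length xs \<and> f (xs ! i) \<in> C}"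
    proof
      fix y assume "y \<in> C \<inter> f ` set xs"
      then obtain i where "i < length xs" "f (xs ! i) = y" "y \<in> C"
        by (auto simp: in_set_conv_nth)
      then show "y \<in> (\<lambda>i. f (xs ! i)) ` {i. i < length xs \<and> f (xs ! i) \<in> C}"
        by (intro image_eqI[of _ _ i]) auto
    qed
  qed (auto intro!: imageI nth_mem)
qed

lemma is_proc_iff: "is_proc a \<longleftrightarrow> a \<in> range Proc"
  and not_is_proc_iff: "\<not> is_proc a \<longleftrightarrow> a \<in> range Test"
  by (cases a; auto)+

fun job :: "operation \<Rightarrow> nat" where
  "job (Test j) = j"
| "job (Proc j) = j"

lemma feasible_ops: "feasible n s \<Longrightarrow> fst ` set s = Test ` {..<n} \<union> Proc ` {..<n}"
  unfolding feasible_def by auto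

lemma feasible_nth_inj:
  "feasible n s \<Longrightarrow> i < length s \<Longrightarrow> i' < length s \<Longrightarrow> fst (s ! i) = fst (s ! i') \<Longrightarrow> i = i'"
  unfolding feasible_def using nth_eq_iff_index_eq[of "map fst s" i i'] by simp

lemma feasible_job_less: "feasible n s \<Longrightarrow> i < length s \<Longrightarrow> job (fst (s ! i)) < n"
proof -
  assume "feasible n s" "i < length s"
  then have "fst (s ! i) \<in> Test ` {..<n} \<union> Proc ` {..<n}"
    using feasible_ops nth_mem by (metis image_eqI)
  then show ?thesis by auto
qed

lemma feasible_test_before:
  "feasible n s \<Longrightarrow> m < length s \<Longrightarrow> fst (s ! m) = Proc j \<Longrightarrow> \<exists>i<m. fst (s ! i) = Test j"
  unfolding feasible_def by blast

lemma feasible_idle_nonneg: "feasible n s \<Longrightarrow> k < length s \<Longrightarrow> 0 \<le> snd (s ! k)"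
  unfolding feasible_def by blast

lemma feasible_card_positions:
  assumes "feasible n s" and "c = Test \<or> c = Proc"
  shows "card {i. i < length s \<and> fst (s ! i) \<in> range c} = n"
proof -
  have "card {i. i < length s \<and> fst (s ! i) \<in> range c} = card (range c \<inter> fst ` set s)"
    using assms(1) unfolding feasible_def by (intro card_positions_in) blast
  also have "range c \<inter> fst ` set s = c ` {..<n}"
    using assms(2) by (elim disjE) (auto simp: feasible_ops[OF assms(1)])
  also have "card (c ` {..<n}) = n"
    using assms(2) by (auto simp: card_image inj_on_def)
  finally show ?thesis .
qed

lemma feasible_tests_before_length: "feasible n s \<Longrightarrow> tests_before s (length s) = n"
  unfolding tests_before_def not_is_proc_iff by (simp add: feasible_card_positions)

lemma feasible_procs_before_length: "feasible n s \<Longrightarrow> procs_before s (length s) = n"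
  unfolding procs_before_def is_proc_iff by (simp add: feasible_card_positions)

lemma feasible_test_position:
  assumes f: "feasible n s" and k: "k < n"
  shows "\<exists>L < length s. \<not> is_proc (fst (s ! L)) \<and> tests_before s L = k"
proof -
  have "\<exists>m. m < length s \<and> k < tests_before s (Suc m)"
    using feasible_tests_before_length[OF f] k
    by (intro exI[of _ "length s - 1"]) (cases "length s"; auto)
  then obtain m where m: "m < length s" "k < tests_before s (Suc m)"
    and least: "\<And>m'. m' < m \<Longrightarrow> \<not> k < tests_before s (Suc m')"
    using exists_least_iff[of "\<lambda>m. m < length s \<and> k < tests_before s (Suc m)"]
    by (metis less_trans)
  have "tests_before s m \<le> k"
    using least by (cases m) (auto simp: not_less)
  then show ?thesis
    using m tests_before_Suc[of s m] by (intro exI[of _ m]) (auto split: if_splits)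
qed

lemma feasible_inj_on_job:
  assumes "feasible n s" and "I \<subseteq> {i. i < length s \<and> is_proc (fst (s ! i)) = b}"
  shows "inj_on (\<lambda>i. job (fst (s ! i))) I"
proof (rule inj_onI)
  fix i i' assume "i \<in> I" "i' \<in> I" "job (fst (s ! i)) = job (fst (s ! i'))"
  moreover have "is_proc (fst (s ! i)) = is_proc (fst (s ! i'))"
    using assms(2) \<open>i \<in> I\<close> \<open>i' \<in> I\<close> by auto
  ultimately have "fst (s ! i) = fst (s ! i')"
    by (cases "fst (s ! i)"; cases "fst (s ! i')") auto
  with assms \<open>i \<in> I\<close> \<open>i' \<in> I\<close> show "i = i'"
    using feasible_nth_inj by blast
qed

lemma sum_procs_before_Suc:
  "(\<Sum>m | m < M \<and> is_proc (fst (s ! m)). real (procs_before s m) + 1)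
     = real (procs_before s M) * (real (procs_before s M) + 1) / 2"
proof (induction M)
  case (Suc M)
  have "finite {m. m < M \<and> is_proc (fst (s ! m))}"
    by simp
  moreover have "{m. m < Suc M \<and> is_proc (fst (s ! m))}
      = (if is_proc (fst (s ! M)) then insert M else id) {m. m < M \<and> is_proc (fst (s ! m))}"
    by (auto simp: less_Suc_eq)
  ultimately show ?case
    using Suc by (simp add: procs_before_Suc algebra_simps add_divide_distrib)
qed simp

definition early_procs :: "(operation \<times> real) list \<Rightarrow> nat \<Rightarrow> nat \<Rightarrow> nat" where
  "early_procs s L j = card {m. m < L \<and> is_proc (fst (s ! m)) \<and> tests_before s m \<le> j}"

lemma early_procs_mono: "j \<le> j' \<Longrightarrow> early_procs s M j \<le> early_procs s M j'"
  unfolding early_procs_def by (rule card_mono) auto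

lemma early_procs_le: "feasible n s \<Longrightarrow> early_procs s (length s) j \<le> n"
proof -
  have "early_procs s (length s) j \<le> procs_before s (length s)"
    unfolding early_procs_def procs_before_def by (rule card_mono) auto
  then show "feasible n s \<Longrightarrow> ?thesis"
    by (simp add: feasible_procs_before_length)
qed

lemma early_procs_0: "feasible n s \<Longrightarrow> early_procs s (length s) 0 = 0"
proof -
  assume f: "feasible n s"
  have "tests_before s m \<noteq> 0" if m: "m < length s" "fst (s ! m) = Proc j" for m j
  proof -
    obtain i where "i < m" "fst (s ! i) = Test j"
      using feasible_test_before[OF f m] by blast
    then show ?thesis
      by (auto simp: tests_before_def card_eq_0_iff)
  qed
  then have "{m. m < length s \<and> is_proc (fst (s ! m)) \<and> tests_before s m \<le> 0} = {}"
    by (auto simp: is_proc_iff)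
  then show ?thesis
    by (simp add: early_procs_def)
qed

text \<open>Double counting: a processing part preceded by t tests is counted once for each j < t.\<close>
lemma sum_tests_before_procs:
  "(\<Sum>m | m < L \<and> is_proc (fst (s ! m)). real (tests_before s m))
     = (\<Sum>j < tests_before s L. real (procs_before s L) - real (early_procs s L j))"
proof -
  let ?P = "{m. m < L \<and> is_proc (fst (s ! m))}"
  let ?k = "tests_before s L"
  have "real (tests_before s m) = (\<Sum>j<?k. if j < tests_before s m then 1 else 0)" if "m \<in> ?P" for m
  proof -
    have "tests_before s m \<le> ?k"
      using that by (simp add: tests_before_mono)
    then have "{j \<in> {..<?k}. j < tests_before s m} = {..<tests_before s m}"
      by auto
    then show ?thesis
      by (simp add: sum.inter_filter[symmetric])
  qed
  then have "(\<Sum>m\<in>?P. real (tests_before s m))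
      = (\<Sum>j<?k. \<Sum>m\<in>?P. if j < tests_before s m then 1 else 0)"
    by (simp add: sum.swap[of _ "{..<?k}"])
  also have "\<dots> = (\<Sum>j<?k. real (procs_before s L) - real (early_procs s L j))"
  proof (rule sum.cong[OF refl])
    fix j
    have "{m\<in>?P. j < tests_before s m}
        = ?P - {m. m < L \<and> is_proc (fst (s ! m)) \<and> tests_before s m \<le> j}"
      by auto
    then have "card {m\<in>?P. j < tests_before s m} = procs_before s L - early_procs s L j"
      by (simp add: card_Diff_subset subset_iff early_procs_def procs_before_def)
    moreover have "early_procs s L j \<le> procs_before s L"
      unfolding early_procs_def procs_before_def by (rule card_mono) auto
    ultimately show "(\<Sum>m\<in>?P. if j < tests_before s m then 1 else 0)
        = real (procs_before s L) - real (early_procs s L j)"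
      by (simp add: sum.inter_filter[symmetric])
  qed
  finally show ?thesis .
qed

section \<open>Busy time and the offline optimum\<close>

definition busy_time :: "(nat \<Rightarrow> real) \<Rightarrow> (operation \<times> real) list \<Rightarrow> nat \<Rightarrow> real" where
  "busy_time p s m = (\<Sum>i<m. dur p (fst (s ! i)))"

lemma busy_time_Suc: "busy_time p s (Suc m) = busy_time p s m + dur p (fst (s ! m))"
  unfolding busy_time_def by simp

lemma busy_time_split:
  "L \<le> m \<Longrightarrow> busy_time p s (Suc m) = busy_time p s L + (\<Sum>i\<in>{L..m}. dur p (fst (s ! i)))"
proof -
  assume "L \<le> m"
  then have "{..<Suc m} = {..<L} \<union> {L..m}" and "{..<L} \<inter> {L..m} = {}"
    by auto
  then show ?thesis
    unfolding busy_time_def by (simp add: sum.union_disjoint)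
qed

lemma dur_nonneg: "(\<And>j. 0 \<le> p j) \<Longrightarrow> 0 \<le> dur p a"
  by (cases a) auto

lemma cost_ge_busy_time:
  assumes f: "feasible n s" and p: "\<And>j. 0 \<le> p j"
  shows "(\<Sum>m | m < length s \<and> is_proc (fst (s ! m)). busy_time p s (Suc m)) \<le> cost p s"
  unfolding cost_def
proof (rule sum_mono)
  fix m assume "m \<in> {m. m < length s \<and> is_proc (fst (s ! m))}"
  then have "\<And>i. i \<in> {..m} \<Longrightarrow> 0 \<le> snd (s ! i)"
    using feasible_idle_nonneg[OF f] by auto
  then have "(\<Sum>i\<le>m. dur p (fst (s ! i))) \<le> (\<Sum>i\<le>m. snd (s ! i) + dur p (fst (s ! i)))"
    by (intro sum_mono) auto
  then show "busy_time p s (Suc m) \<le> finish p s m"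
    unfolding busy_time_def finish_def lessThan_Suc_atMost .
qed

lemma cost_nonneg: "feasible n s \<Longrightarrow> (\<And>j. 0 \<le> p j) \<Longrightarrow> 0 \<le> cost p s"
  unfolding cost_def finish_def
  by (intro sum_nonneg add_nonneg_nonneg) (auto simp: feasible_idle_nonneg dur_nonneg)

lemma OPT_le_cost:
  assumes "feasible n s" and "\<And>j. 0 \<le> p j"
  shows "OPT n p \<le> cost p s"
proof -
  have "bdd_below {cost p s |s. feasible n s}"
    by (rule bdd_belowI[of _ 0]) (auto intro: cost_nonneg assms(2))
  then show ?thesis
    unfolding OPT_def using assms(1) by (auto intro: cInf_lower)
qed

lemma OPT_nonneg: "feasible n s \<Longrightarrow> (\<And>j. 0 \<le> p j) \<Longrightarrow> 0 \<le> OPT n p"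
  unfolding OPT_def by (rule cInf_greatest) (auto intro: cost_nonneg)

definition serial_schedule :: "nat list \<Rightarrow> (operation \<times> real) list" where
  "serial_schedule js =
     map (\<lambda>m. (if even m then Test (js ! (m div 2)) else Proc (js ! (m div 2)), 0)) [0..<2 * length js]"

lemma length_serial_schedule [simp]: "length (serial_schedule js) = 2 * length js"
  by (simp add: serial_schedule_def)

lemma nth_serial_schedule:
  "m < 2 * length js \<Longrightarrow>
   serial_schedule js ! m = (if even m then Test (js ! (m div 2)) else Proc (js ! (m div 2)), 0)"
  by (simp add: serial_schedule_def)

lemma serial_schedule_ops:
  "fst ` set (serial_schedule js) = Test ` set js \<union> Proc ` set js"
proof -
  have "fst ` set (serial_schedule js)
      = (\<lambda>m. if even m then Test (js ! (m div 2)) else Proc (js ! (m div 2))) ` {..<2 * length js}"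
    by (auto simp: serial_schedule_def image_image lessThan_atLeast0)
  also have "\<dots> = (\<lambda>l. Test (js ! l)) ` {..<length js} \<union> (\<lambda>l. Proc (js ! l)) ` {..<length js}"
  proof (intro equalityI subsetI)
    fix a assume "a \<in> (\<lambda>m. if even m then Test (js ! (m div 2)) else Proc (js ! (m div 2))) ` {..<2 * length js}"
    then show "a \<in> (\<lambda>l. Test (js ! l)) ` {..<length js} \<union> (\<lambda>l. Proc (js ! l)) ` {..<length js}"
      by (auto split: if_splits)
  next
    fix a assume "a \<in> (\<lambda>l. Test (js ! l)) ` {..<length js} \<union> (\<lambda>l. Proc (js ! l)) ` {..<length js}"
    then obtain l where l: "l < length js" and "a = Test (js ! l) \<or> a = Proc (js ! l)"
      by blast
    then consider "a = Test (js ! l)" | "a = Proc (js ! l)"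
      by blast
    then show "a \<in> (\<lambda>m. if even m then Test (js ! (m div 2)) else Proc (js ! (m div 2))) ` {..<2 * length js}"
    proof cases
      case 1
      with l show ?thesis by (intro image_eqI[of _ _ "2 * l"]) auto
    next
      case 2
      with l show ?thesis by (intro image_eqI[of _ _ "Suc (2 * l)"]) auto
    qed
  qed
  also have "\<dots> = Test ` set js \<union> Proc ` set js"
    by (auto simp: image_iff in_set_conv_nth)
  finally show ?thesis .
qed

lemma serial_schedule_feasible:
  assumes "distinct js" and "set js = {..<n}"
  shows "feasible n (serial_schedule js)"
proof -
  let ?s = "serial_schedule js"
  have len: "length js = n"
    using assms distinct_card by fastforce
  have ops: "set (map fst ?s) = Test ` {..<n} \<union> Proc ` {..<n}"
    using serial_schedule_ops assms(2) by simp
  have card_ops: "card (Test ` {..<n} \<union> Proc ` {..<n}) = length (map fst ?s)"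
    by (subst card_Un_disjoint) (auto simp: card_image inj_on_def len)
  have "distinct (map fst ?s)"
    by (rule card_distinct) (simp only: ops card_ops)
  moreover have "\<exists>i<k. fst (?s ! i) = Test j" if "k < length ?s" "fst (?s ! k) = Proc j" for k j
  proof -
    have "odd k" "js ! (k div 2) = j"
      using that by (auto simp: nth_serial_schedule split: if_splits)
    then show ?thesis
      using that by (intro exI[of _ "k - 1"]) (auto simp: nth_serial_schedule elim: oddE)
  qed
  ultimately show ?thesis
    unfolding feasible_def using ops by (auto simp: nth_serial_schedule)
qed

lemma sum_atMost_pairs:
  "(\<Sum>i\<le>Suc (2 * l). g i) = (\<Sum>l'\<le>l. g (2 * l') + g (Suc (2 * l')))"
  by (induction l) (auto simp: atMost_Suc add_ac)

lemma cost_serial_schedule: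
  "cost p (serial_schedule js) = (\<Sum>l<length js. \<Sum>l'\<le>l. 1 + p (js ! l'))"
proof -
  let ?s = "serial_schedule js"
  have procs: "{k. k < length ?s \<and> is_proc (fst (?s ! k))} = (\<lambda>l. Suc (2 * l)) ` {..<length js}"
  proof (intro equalityI subsetI)
    fix k assume "k \<in> {k. k < length ?s \<and> is_proc (fst (?s ! k))}"
    then have "k < 2 * length js" "odd k"
      by (auto simp: nth_serial_schedule split: if_splits)
    then show "k \<in> (\<lambda>l. Suc (2 * l)) ` {..<length js}"
      by (auto elim!: oddE)
  qed (auto simp: nth_serial_schedule)
  have "finish p ?s (Suc (2 * l)) = (\<Sum>l'\<le>l. 1 + p (js ! l'))" if "l < length js" for l
    unfolding finish_def sum_atMost_pairs
    using that by (intro sum.cong) (auto simp: nth_serial_schedule)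
  then show ?thesis
    unfolding cost_def procs by (simp add: sum.reindex inj_on_def)
qed

section \<open>The adversary\<close>

definition tested_jobs :: "(operation \<times> real) list \<Rightarrow> nat \<Rightarrow> nat set" where
  "tested_jobs s L = {j. \<exists>i<L. fst (s ! i) = Test j}"

lemma
  assumes "\<And>i. i < L \<Longrightarrow> s ! i = s' ! i"
  shows tests_before_prefix_cong: "m \<le> L \<Longrightarrow> tests_before s m = tests_before s' m"
    and early_procs_prefix_cong: "early_procs s L j = early_procs s' L j"
    and tested_jobs_prefix_cong: "tested_jobs s L = tested_jobs s' L"
proof -
  show tb: "tests_before s m = tests_before s' m" if "m \<le> L" for m
    unfolding tests_before_def using assms that by (intro arg_cong[where f = card]) auto
  show "early_procs s L j = early_procs s' L j"
    unfolding early_procs_def using assms tb by (intro arg_cong[where f = card]) auto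
  show "tested_jobs s L = tested_jobs s' L"
    unfolding tested_jobs_def using assms by auto
qed

text \<open>With Q j the number of processing parts started before the (j+1)-th test, the first two
  summands bound the completion times of the Q k processing parts started before the (k+1)-th
  test, the last one those of the remaining n - Q k processing parts.\<close>
definition alg_bound :: "real \<Rightarrow> nat \<Rightarrow> nat \<Rightarrow> (nat \<Rightarrow> nat) \<Rightarrow> real" where
  "alg_bound x n k Q = (\<Sum>j<k. real (Q k) - real (Q j)) + x * (real (Q k) * (real (Q k) + 1) / 2)
     + (\<Sum>r = 1..n - Q k. real k + x * real (Q k) + real r + (x - 1) * real (r - (n - k)))"

lemma alg_bound_cong:
  assumes "\<And>j. j \<le> k \<Longrightarrow> Q j = Q' j"
  shows "alg_bound x n k Q = alg_bound x n k Q'"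
proof -
  have "(\<Sum>j<k. real (Q k) - real (Q j)) = (\<Sum>j<k. real (Q' k) - real (Q' j))"
    using assms by (intro sum.cong) auto
  then show ?thesis
    using assms[of k] by (simp add: alg_bound_def)
qed

definition opt_bound :: "real \<Rightarrow> nat \<Rightarrow> nat \<Rightarrow> real" where
  "opt_bound x n k = (\<Sum>l<n. \<Sum>l'\<le>l. 1 + (if l' < n - k then 0 else x))"

locale prefix_instance =
  fixes n k L :: nat and s :: "(operation \<times> real) list" and x :: real and p :: "nat \<Rightarrow> real"
  assumes feasible: "feasible n s"
    and L_less: "L < length s"
    and test_at_L: "\<not> is_proc (fst (s ! L))"
    and tests_before_L: "tests_before s L = k"
    and x_ge_1: "1 \<le> x"
    and p_eq: "p = (\<lambda>j. if j \<in> tested_jobs s L then x else 0)"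
begin

lemma p_nonneg: "0 \<le> p j"
  using x_ge_1 by (simp add: p_eq)

lemma tested_jobs_eq:
  "tested_jobs s L = (\<lambda>i. job (fst (s ! i))) ` {i. i < L \<and> \<not> is_proc (fst (s ! i))}"
proof (intro equalityI subsetI)
  fix j assume "j \<in> tested_jobs s L"
  then obtain i where "i < L" "fst (s ! i) = Test j"
    by (auto simp: tested_jobs_def)
  then show "j \<in> (\<lambda>i. job (fst (s ! i))) ` {i. i < L \<and> \<not> is_proc (fst (s ! i))}"
    by force
next
  fix j assume "j \<in> (\<lambda>i. job (fst (s ! i))) ` {i. i < L \<and> \<not> is_proc (fst (s ! i))}"
  then obtain i where "i < L" "\<not> is_proc (fst (s ! i))" "j = job (fst (s ! i))"
    by blast
  then show "j \<in> tested_jobs s L"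
    unfolding tested_jobs_def by (cases "fst (s ! i)") auto
qed

lemma card_tested_jobs: "card (tested_jobs s L) = k"
proof -
  have "inj_on (\<lambda>i. job (fst (s ! i))) {i. i < L \<and> \<not> is_proc (fst (s ! i))}"
    using L_less by (intro feasible_inj_on_job[OF feasible, where b = False]) auto
  then show ?thesis
    using tests_before_L by (simp add: tested_jobs_eq card_image tests_before_def)
qed

lemma tested_jobs_subset: "tested_jobs s L \<subseteq> {..<n}"
  using feasible_job_less[OF feasible] L_less by (auto simp: tested_jobs_eq)

lemma busy_time_before_L:
  "M \<le> L \<Longrightarrow> busy_time p s M = real (tests_before s M) + x * real (procs_before s M)"
proof (induction M)
  case (Suc M)
  show ?case
  proof (cases "fst (s ! M)")
    case (Test j)
    then show ?thesis
      using Suc by (simp add: busy_time_Suc tests_before_Suc procs_before_Suc)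
  next
    case (Proc j)
    then obtain i where "i < M" "fst (s ! i) = Test j"
      using feasible_test_before[OF feasible, of M j] Suc.prems L_less by auto
    then have "p j = x"
      using Suc.prems by (auto simp: p_eq tested_jobs_def)
    then show ?thesis
      using Suc Proc by (simp add: busy_time_Suc tests_before_Suc procs_before_Suc algebra_simps)
  qed
qed (simp add: busy_time_def)

text \<open>Long jobs are those tested before position L; all other jobs have processing time 0.\<close>
definition long_procs :: "nat \<Rightarrow> nat set" where
  "long_procs m =
     {i. L < i \<and> i \<le> m \<and> is_proc (fst (s ! i)) \<and> job (fst (s ! i)) \<in> tested_jobs s L}"

definition short_procs :: "nat \<Rightarrow> nat set" where
  "short_procs m =
     {i. L < i \<and> i \<le> m \<and> is_proc (fst (s ! i)) \<and> job (fst (s ! i)) \<notin> tested_jobs s L}"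

definition short_tests :: "nat \<Rightarrow> nat set" where
  "short_tests m =
     {i. L \<le> i \<and> i \<le> m \<and> \<not> is_proc (fst (s ! i)) \<and> job (fst (s ! i)) \<notin> tested_jobs s L}"

lemma inj_on_job_short_procs: "m < length s \<Longrightarrow> inj_on (\<lambda>i. job (fst (s ! i))) (short_procs m)"
  by (intro feasible_inj_on_job[OF feasible, where b = True]) (auto simp: short_procs_def)

text \<open>A short job processed after position L is tested after position L as well.\<close>
lemma card_short_procs_le_tests: "m < length s \<Longrightarrow> card (short_procs m) \<le> card (short_tests m)"
proof -
  assume m: "m < length s"
  let ?job = "\<lambda>i. job (fst (s ! i))"
  have "?job ` short_procs m \<subseteq> ?job ` short_tests m"
  proof
    fix j assume "j \<in> ?job ` short_procs m"
    then obtain i where i: "i \<in> short_procs m" "j = ?job i"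
      by blast
    have "fst (s ! i) = Proc j"
      using i by (cases "fst (s ! i)") (auto simp: short_procs_def)
    moreover have "i < length s"
      using i m by (simp add: short_procs_def)
    ultimately obtain i0 where i0: "i0 < i" "fst (s ! i0) = Test j"
      using feasible_test_before[OF feasible] by blast
    have short: "j \<notin> tested_jobs s L" and "i \<le> m"
      using i by (auto simp: short_procs_def)
    have "L \<le> i0"
    proof (rule ccontr)
      assume "\<not> L \<le> i0"
      with i0 have "j \<in> tested_jobs s L"
        by (auto simp: tested_jobs_def not_le)
      with short show False ..
    qed
    with i0 short \<open>i \<le> m\<close> have "i0 \<in> short_tests m"
      by (simp add: short_tests_def)
    with i0 show "j \<in> ?job ` short_tests m"
      by force
  qed
  moreover have fin: "finite (short_tests m)"
    by (rule finite_subset[of _ "{..m}"]) (auto simp: short_tests_def)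
  ultimately have "card (?job ` short_procs m) \<le> card (?job ` short_tests m)"
    by (intro card_mono) auto
  also have "\<dots> \<le> card (short_tests m)"
    using fin by (rule card_image_le)
  finally have "card (?job ` short_procs m) \<le> card (short_tests m)" .
  then show ?thesis
    using card_image[OF inj_on_job_short_procs[OF m]] by simp
qed

lemma card_short_procs_le: "m < length s \<Longrightarrow> card (short_procs m) \<le> n - k"
proof -
  assume m: "m < length s"
  have "(\<lambda>i. job (fst (s ! i))) ` short_procs m \<subseteq> {..<n} - tested_jobs s L"
    using feasible_job_less[OF feasible] m by (auto simp: short_procs_def)
  then have "card ((\<lambda>i. job (fst (s ! i))) ` short_procs m) \<le> n - k"
    using card_mono[of "{..<n} - tested_jobs s L"] tested_jobs_subset
    by (simp add: card_Diff_subset finite_subset card_tested_jobs)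
  then show ?thesis
    using card_image[OF inj_on_job_short_procs[OF m]] by simp
qed

lemma window_dur_ge:
  "x * card (long_procs m) + card (short_tests m) \<le> (\<Sum>i\<in>{L..m}. dur p (fst (s ! i)))"
proof -
  have fin: "finite (long_procs m)" "finite (short_tests m)"
    by (rule finite_subset[of _ "{..m}"], auto simp: long_procs_def short_tests_def)+
  have "dur p (fst (s ! i)) = x" if "i \<in> long_procs m" for i
    using that by (cases "fst (s ! i)") (auto simp: long_procs_def p_eq)
  moreover have "dur p (fst (s ! i)) = 1" if "i \<in> short_tests m" for i
    using that by (cases "fst (s ! i)") (auto simp: short_tests_def)
  ultimately have "x * card (long_procs m) + card (short_tests m)
      = (\<Sum>i\<in>long_procs m \<union> short_tests m. dur p (fst (s ! i)))"
    using fin by (subst sum.union_disjoint) (auto simp: long_procs_def short_tests_def)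
  also have "\<dots> \<le> (\<Sum>i\<in>{L..m}. dur p (fst (s ! i)))"
    by (intro sum_mono2) (auto simp: long_procs_def short_tests_def dur_nonneg p_nonneg)
  finally show ?thesis .
qed

lemma window_bound:
  assumes "m < length s" and "r = card {i. L < i \<and> i \<le> m \<and> is_proc (fst (s ! i))}"
  shows "real r + (x - 1) * real (r - (n - k)) \<le> (\<Sum>i\<in>{L..m}. dur p (fst (s ! i)))"
proof -
  have "{i. L < i \<and> i \<le> m \<and> is_proc (fst (s ! i))} = long_procs m \<union> short_procs m"
    by (auto simp: long_procs_def short_procs_def)
  moreover have "finite (long_procs m)" "finite (short_procs m)"
    by (rule finite_subset[of _ "{..m}"], auto simp: long_procs_def short_procs_def)+
  ultimately have r: "r = card (long_procs m) + card (short_procs m)"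
    using assms(2) by (simp add: card_Un_disjoint long_procs_def short_procs_def disjoint_iff)
  have "real r + (x - 1) * real (r - (n - k)) \<le> x * card (long_procs m) + card (short_tests m)"
  proof (cases "r \<le> n - k")
    case True
    have "real (card (long_procs m)) \<le> x * card (long_procs m)"
      using x_ge_1 mult_right_mono[of 1 x "real (card (long_procs m))"] by simp
    then show ?thesis
      using True r card_short_procs_le_tests[OF assms(1)] by simp
  next
    case False
    then have "real (r - (n - k)) \<le> card (long_procs m)"
      using r card_short_procs_le[OF assms(1)] by linarith
    then have "(x - 1) * real (r - (n - k)) \<le> (x - 1) * card (long_procs m)"
      using x_ge_1 by (intro mult_left_mono) auto
    then show ?thesis
      using r card_short_procs_le_tests[OF assms(1)] by (simp add: algebra_simps)
  qed
  then show ?thesis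
    using window_dur_ge[of m] by linarith
qed

lemma sum_busy_time_after_L:
  "M \<le> length s \<Longrightarrow>
   (\<Sum>r = 1..card {m. L < m \<and> m < M \<and> is_proc (fst (s ! m))}.
       busy_time p s L + real r + (x - 1) * real (r - (n - k)))
     \<le> (\<Sum>m | L < m \<and> m < M \<and> is_proc (fst (s ! m)). busy_time p s (Suc m))"
proof (induction M)
  case (Suc M)
  let ?A = "\<lambda>M. {m. L < m \<and> m < M \<and> is_proc (fst (s ! m))}"
  let ?g = "\<lambda>r. busy_time p s L + real r + (x - 1) * real (r - (n - k))"
  have IH: "(\<Sum>r = 1..card (?A M). ?g r) \<le> (\<Sum>m\<in>?A M. busy_time p s (Suc m))"
    using Suc by simp
  have fin: "finite (?A M)"
    by (rule finite_subset[of _ "{..<M}"]) auto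
  show ?case
  proof (cases "L < M \<and> is_proc (fst (s ! M))")
    case True
    then have A: "?A (Suc M) = insert M (?A M)"
      by (auto simp: less_Suc_eq)
    then have card: "card (?A (Suc M)) = Suc (card (?A M))"
      using fin by simp
    have "{i. L < i \<and> i \<le> M \<and> is_proc (fst (s ! i))} = ?A (Suc M)"
      by (auto simp: less_Suc_eq_le)
    then have "?g (Suc (card (?A M))) \<le> busy_time p s (Suc M)"
      using window_bound[of M "Suc (card (?A M))"] Suc.prems True card busy_time_split[of L M p s]
      by simp
    then show ?thesis
      using IH A card fin by simp
  next
    case False
    then have "?A (Suc M) = ?A M"
      by (auto simp: less_Suc_eq)
    then show ?thesis
      using IH by simp
  qed
qed simp

lemma early_procs_L: "early_procs s L k = procs_before s L"
proof -
  have "{m. m < L \<and> is_proc (fst (s ! m)) \<and> tests_before s m \<le> k} = {m. m < L \<and> is_proc (fst (s ! m))}"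
    using tests_before_mono[of _ L s] tests_before_L by auto
  then show ?thesis
    by (simp add: early_procs_def procs_before_def)
qed

lemma cost_ge_alg_bound: "alg_bound x n k (early_procs s L) \<le> cost p s"
proof -
  let ?P = "procs_before s L"
  let ?before = "{m. m < L \<and> is_proc (fst (s ! m))}"
  let ?after = "{m. L < m \<and> m < length s \<and> is_proc (fst (s ! m))}"
  have split: "{m. m < length s \<and> is_proc (fst (s ! m))} = ?before \<union> ?after"
    using L_less test_at_L by auto (metis linorder_neqE_nat)
  have fin: "finite ?before" "finite ?after"
    by (rule finite_subset[of _ "{..<length s}"], use L_less in auto)+
  have "card ?before + card ?after = n"
    using feasible_procs_before_length[OF feasible] fin
    by (simp add: procs_before_def split card_Un_disjoint disjoint_iff)
  then have card_after: "card ?after = n - ?P"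
    by (simp add: procs_before_def)
  have "(\<Sum>m\<in>?before. busy_time p s (Suc m))
      = (\<Sum>m\<in>?before. real (tests_before s m) + x * (real (procs_before s m) + 1))"
    by (intro sum.cong) (auto simp: busy_time_before_L tests_before_Suc procs_before_Suc algebra_simps)
  also have "\<dots> = (\<Sum>m\<in>?before. real (tests_before s m)) + x * (\<Sum>m\<in>?before. real (procs_before s m) + 1)"
    unfolding sum_distrib_left by (rule sum.distrib)
  also have "\<dots> = (\<Sum>j<k. real ?P - real (early_procs s L j)) + x * (real ?P * (real ?P + 1) / 2)"
    by (simp only: sum_tests_before_procs sum_procs_before_Suc tests_before_L)
  finally have before: "(\<Sum>m\<in>?before. busy_time p s (Suc m))
      = (\<Sum>j<k. real ?P - real (early_procs s L j)) + x * (real ?P * (real ?P + 1) / 2)" .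
  have "busy_time p s L = real k + x * real ?P"
    by (simp add: busy_time_before_L tests_before_L)
  then have after: "(\<Sum>r = 1..n - ?P. real k + x * real ?P + real r + (x - 1) * real (r - (n - k)))
      \<le> (\<Sum>m\<in>?after. busy_time p s (Suc m))"
    using sum_busy_time_after_L[of "length s"] card_after by simp
  have "(\<Sum>m\<in>?before \<union> ?after. busy_time p s (Suc m)) \<le> cost p s"
    using cost_ge_busy_time[OF feasible p_nonneg] by (simp only: split)
  then show ?thesis
    unfolding alg_bound_def early_procs_L using before after fin
    by (simp add: sum.union_disjoint disjoint_iff)
qed

text \<open>Test and process the short jobs first, then the long ones.\<close>
lemma OPT_le_opt_bound: "OPT n p \<le> opt_bound x n k"
proof -
  let ?T = "tested_jobs s L"
  let ?short = "sorted_list_of_set ({..<n} - ?T)" and ?long = "sorted_list_of_set ?T"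
  define js where "js = ?short @ ?long"
  have fin: "finite ?T"
    using tested_jobs_subset finite_subset by blast
  have len: "length ?short = n - k" "length ?long = k"
    using card_tested_jobs tested_jobs_subset fin by (simp_all add: card_Diff_subset)
  have js: "distinct js" "set js = {..<n}"
    using fin tested_jobs_subset by (auto simp: js_def)
  have p_js: "p (js ! l) = (if l < n - k then 0 else x)" if "l < n" for l
  proof (cases "l < n - k")
    case True
    then have "js ! l \<in> set ?short"
      using len nth_mem[of l ?short] by (simp add: js_def nth_append)
    then show ?thesis
      using True by (simp add: p_eq)
  next
    case False
    then have "js ! l \<in> set ?long"
      using len that nth_mem[of "l - (n - k)" ?long] by (simp add: js_def nth_append)
    then show ?thesis
      using False fin by (simp add: p_eq)
  qed
  have "OPT n p \<le> cost p (serial_schedule js)"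
    using js by (intro OPT_le_cost serial_schedule_feasible p_nonneg)
  also have "\<dots> = opt_bound x n k"
    using js distinct_card[of js] p_js by (simp add: cost_serial_schedule opt_bound_def)
  finally show ?thesis .
qed

lemma early_procs_eq_total:
  assumes "j \<le> k"
  shows "early_procs s L j = early_procs s (length s) j"
proof -
  have "m < L" if "m < length s" "is_proc (fst (s ! m))" "tests_before s m \<le> j" for m
  proof (rule ccontr)
    assume "\<not> m < L"
    then have "tests_before s (Suc L) \<le> tests_before s m"
      using test_at_L that by (intro tests_before_mono) (auto simp: not_less le_less Suc_le_eq)
    then show False
      using that assms test_at_L tests_before_L by (simp add: tests_before_Suc)
  qed
  then show ?thesis
    unfolding early_procs_def using L_less by (intro arg_cong[where f = card]) auto
qed

end

lemma adversary_instance: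
  fixes A :: online_algorithm
  assumes A: "online_alg A" and x: "1 \<le> x" and k: "k < n"
  defines "S \<equiv> run A n (\<lambda>_. x) (2 * n)"
  shows "\<exists>p. (\<forall>j<n. 0 \<le> p j) \<and> alg_bound x n k (early_procs S (length S)) \<le> ALG A n p
           \<and> 0 \<le> OPT n p \<and> OPT n p \<le> opt_bound x n k"
proof -
  have feasible: "feasible n (run A n p (2 * n))" if "\<And>j. 0 \<le> p j" for p
    using A that unfolding online_alg_def by blast
  then have "feasible n S"
    using x by (simp add: S_def)
  then obtain L where L: "L < length S" "\<not> is_proc (fst (S ! L))" "tests_before S L = k"
    using feasible_test_position k by blast
  define p where "p = (\<lambda>j. if j \<in> tested_jobs S L then x else 0)"
  interpret S: prefix_instance n k L S x p
    using \<open>feasible n S\<close> L x p_def by unfold_locales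
  define S' where "S' = run A n p (2 * n)"
  have "run A n (\<lambda>_. x) (Suc L) = run A n p (Suc L)"
  proof (rule run_Suc_cong)
    fix i j assume "i < L" "fst (run A n (\<lambda>_. x) L ! i) = Test j"
    moreover have "run A n (\<lambda>_. x) L ! i = S ! i"
      using \<open>i < L\<close> L(1) nth_run[of i L "2 * n"] by (simp add: S_def)
    ultimately have "j \<in> tested_jobs S L"
      by (auto simp: tested_jobs_def)
    then show "x = p j"
      by (simp add: p_def)
  qed
  moreover have "Suc L \<le> 2 * n"
    using L(1) by (simp add: S_def)
  ultimately have same: "S' ! i = S ! i" if "i \<le> L" for i
    using that nth_run[of i "Suc L" "2 * n" A n] by (simp add: S_def S'_def)
  have "feasible n S'"
    unfolding S'_def using S.p_nonneg by (rule feasible)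
  interpret S': prefix_instance n k L S' x p
  proof
    show "feasible n S'"
      by fact
    show "L < length S'" "1 \<le> x"
      using L(1) x by (simp_all add: S_def S'_def)
    show "\<not> is_proc (fst (S' ! L))"
      using L(2) same by simp
    show "tests_before S' L = k"
      using L(3) same tests_before_prefix_cong[of L S' S] by simp
    show "p = (\<lambda>j. if j \<in> tested_jobs S' L then x else 0)"
      using same tested_jobs_prefix_cong[of L S' S] by (simp add: p_def)
  qed
  have "alg_bound x n k (early_procs S (length S)) = alg_bound x n k (early_procs S' L)"
    using S.early_procs_eq_total early_procs_prefix_cong[of L S' S] same
    by (intro alg_bound_cong) simp
  also have "\<dots> \<le> ALG A n p"
    using S'.cost_ge_alg_bound by (simp add: ALG_def S'_def)
  finally have "alg_bound x n k (early_procs S (length S)) \<le> ALG A n p" .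
  then show ?thesis
    using S.p_nonneg S.OPT_le_opt_bound OPT_nonneg[OF \<open>feasible n S'\<close> S.p_nonneg]
    by (intro exI[of _ p]) simp
qed

lemma sum_ramp:
  "(\<Sum>r = 1..N. (a::real) + real r + y * real (r - c))
     = real N * a + real N * (real N + 1) / 2 + y * (real (N - c) * (real (N - c) + 1) / 2)"
proof (induction N)
  case (Suc N)
  then show ?case
    by (cases "N < c") (simp_all add: Suc_diff_le field_simps)
qed simp

lemma alg_bound_eight_jobs:
  fixes Q :: "nat \<Rightarrow> nat"
  assumes "Q 0 = 0" "Q 1 \<le> Q 2" "Q 2 \<le> Q 3" "Q 3 \<le> Q 4" "Q 4 \<le> 8"
  shows "\<exists>k\<in>{3, 4}. sqrt 2 * opt_bound (8/5) 8 k < alg_bound (8/5) 8 k Q"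
proof -
  have "sqrt 2 < sqrt ((99/70)\<^sup>2)"
    by (rule real_sqrt_less_mono) (simp add: power2_eq_square)
  then have sqrt_2: "sqrt 2 < 99/70"
    by simp
  have opt: "opt_bound (8/5) 8 3 = 228/5" "opt_bound (8/5) 8 4 = 52"
    by (simp_all add: opt_bound_def eval_nat_numeral lessThan_Suc atMost_Suc)
  have "99/70 * (228/5) \<le> alg_bound (8/5) 8 3 Q \<or> 99/70 * 52 \<le> alg_bound (8/5) 8 4 Q"
  proof -
    have "Q 3 = 0 \<or> Q 3 = 1 \<or> Q 3 = 2 \<or> Q 3 = 3 \<or> Q 3 = 4 \<or> Q 3 = 5 \<or> Q 3 = 6 \<or> Q 3 = 7 \<or> Q 3 = 8"
      and "Q 4 = 0 \<or> Q 4 = 1 \<or> Q 4 = 2 \<or> Q 4 = 3 \<or> Q 4 = 4 \<or> Q 4 = 5 \<or> Q 4 = 6 \<or> Q 4 = 7 \<or> Q 4 = 8"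
      using assms by linarith+
    moreover have "real (Q 1) \<le> real (Q 2)" "real (Q 2) \<le> real (Q 3)"
      using assms by simp_all
    ultimately show ?thesis
      using assms(4) unfolding alg_bound_def sum_ramp
      by (elim disjE) (simp_all add: eval_nat_numeral lessThan_Suc assms(1))
  qed
  then show ?thesis
  proof
    assume "99/70 * (228/5) \<le> alg_bound (8/5) 8 3 Q"
    then have "sqrt 2 * opt_bound (8/5) 8 3 < alg_bound (8/5) 8 3 Q"
      unfolding opt using sqrt_2 by linarith
    then show ?thesis
      by blast
  next
    assume "99/70 * 52 \<le> alg_bound (8/5) 8 4 Q"
    then have "sqrt 2 * opt_bound (8/5) 8 4 < alg_bound (8/5) 8 4 Q"
      unfolding opt using sqrt_2 by linarith
    then show ?thesis
      by blast
  qed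
qed

lemma ratio_less:
  fixes \<rho> R opt alg u :: real
  assumes "0 \<le> opt" "opt \<le> u" "R * u < alg" "\<rho> \<le> R" "0 \<le> R"
  shows "\<rho> * opt < alg"
proof (cases "\<rho> \<le> 0")
  case True
  then have "\<rho> * opt \<le> R * u"
    using assms by (meson mult_nonneg_nonneg mult_nonpos_nonneg order_trans)
  then show ?thesis
    using assms(3) by linarith
next
  case False
  then have "\<rho> * opt \<le> R * u"
    using assms by (intro mult_mono) auto
  then show ?thesis
    using assms(3) by linarith
qed

theorem theorem3:
  fixes A :: online_algorithm and \<rho> :: real
  assumes "online_alg A" and "\<rho> < sqrt 2"
  shows "\<exists>n p. (\<forall>j<n. 0 \<le> p j) \<and> ALG A n p > \<rho> * OPT n p"
proof -
  define S where "S = run A 8 (\<lambda>_. 8/5) (2 * 8)"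
  let ?Q = "early_procs S (length S)"
  have "feasible 8 S"
    unfolding S_def using assms(1)[unfolded online_alg_def, rule_format, of 8] by simp
  then have "\<exists>k\<in>{3, 4}. sqrt 2 * opt_bound (8/5) 8 k < alg_bound (8/5) 8 k ?Q"
    by (intro alg_bound_eight_jobs early_procs_0 early_procs_mono early_procs_le) auto
  then obtain k where k: "k \<in> {3, 4}"
    and bound: "sqrt 2 * opt_bound (8/5) 8 k < alg_bound (8/5) 8 k ?Q"
    by blast
  moreover have "k < 8"
    using k by auto
  ultimately obtain p where p: "\<forall>j<8. 0 \<le> p j" "alg_bound (8/5) 8 k ?Q \<le> ALG A 8 p"
    and opt: "0 \<le> OPT 8 p" "OPT 8 p \<le> opt_bound (8/5) 8 k"
    using adversary_instance[OF assms(1), of "8/5" k 8] unfolding S_def by auto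
  have "\<rho> * OPT 8 p < ALG A 8 p"
  proof (rule ratio_less)
    show "sqrt 2 * opt_bound (8/5) 8 k < ALG A 8 p"
      using bound p(2) by linarith
  qed (use opt assms(2) in auto)
  with p(1) show ?thesis
    by blast
qed

end
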